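(* Let $A$ be a deterministic parity tree automaton and $p$ a productive state of $A$. Then there exist a state $q$, a path $\pi_p$ from $p$ to $q$, and two branching paths $\pi_q^0,\pi_q^1$, each leading from $q$ to $q$, such that both $\pi_q^0$ and $\pi_q^1$ are accepting loops.
   Context: Deterministic parity tree automata: total $\delta:Q\times\Sigma\to Q\times Q$, edges $p\xrightarrow{\sigma,d}q$ with direction $d\in\{0,1\}$. A run is accepting if on every path the highest rank occurring infinitely often is even. A state is productive if it occurs in some accepting run (of the automaton from its initial state). A loop is a path returning to its starting state; it is accepting iff the maximal rank on it is even. Two paths from a common state are branching iff they agree on an initial segment of (letter, direction) pairs and then take the same letter in different directions. *)

theory Defs
  imports Main
begin

text \<open>Deterministic parity tree automata over finite state type 'q and finite alphabet 'a:
  transition delta :: 'q => 'a => 'q * 'q (total), ranks on states, initial state.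
  Direction False = 0 (left, fst), True = 1 (right, snd).
  Infinite binary trees: 'a-labelled functions on nodes bool list.\<close>

definition dir :: "bool \<Rightarrow> 'q \<times> 'q \<Rightarrow> 'q" where
  "dir d pq = (if d then snd pq else fst pq)"

fun run :: "('q \<Rightarrow> 'a \<Rightarrow> 'q \<times> 'q) \<Rightarrow> 'q \<Rightarrow> (bool list \<Rightarrow> 'a) \<Rightarrow> bool list \<Rightarrow> 'q" where
  "run delta p t [] = p"
| "run delta p t (d # u) = run delta (dir d (delta p (t []))) (\<lambda>v. t (d # v)) u"

definition parity_ok :: "(nat \<Rightarrow> nat) \<Rightarrow> bool" where
  "parity_ok f = even (Max {r. \<exists>\<^sub>\<infinity>n. f n = r})"

definition accepting_run :: "('q \<Rightarrow> nat) \<Rightarrow> (bool list \<Rightarrow> 'q) \<Rightarrow> bool" where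
  "accepting_run rank \<rho> = (\<forall>\<beta> :: nat \<Rightarrow> bool. parity_ok (\<lambda>n. rank (\<rho> (map \<beta> [0..<n]))))"

definition productive ::
  "('q \<Rightarrow> 'a \<Rightarrow> 'q \<times> 'q) \<Rightarrow> ('q \<Rightarrow> nat) \<Rightarrow> 'q \<Rightarrow> 'q \<Rightarrow> bool" where
  "productive delta rank init p =
     (\<exists>t. accepting_run rank (run delta init t) \<and> (\<exists>u. run delta init t u = p))"

text \<open>Finite paths from a state: lists of (letter, direction) pairs; pstates lists the visited states.\<close>
fun pstates :: "('q \<Rightarrow> 'a \<Rightarrow> 'q \<times> 'q) \<Rightarrow> 'q \<Rightarrow> ('a \<times> bool) list \<Rightarrow> 'q list" where
  "pstates delta p [] = [p]"
| "pstates delta p ((a, d) # w) = p # pstates delta (dir d (delta p a)) w"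

definition target :: "('q \<Rightarrow> 'a \<Rightarrow> 'q \<times> 'q) \<Rightarrow> 'q \<Rightarrow> ('a \<times> bool) list \<Rightarrow> 'q" where
  "target delta p w = last (pstates delta p w)"

definition is_loop :: "('q \<Rightarrow> 'a \<Rightarrow> 'q \<times> 'q) \<Rightarrow> 'q \<Rightarrow> ('a \<times> bool) list \<Rightarrow> bool" where
  "is_loop delta q w = (w \<noteq> [] \<and> target delta q w = q)"

definition accepting_loop ::
  "('q \<Rightarrow> 'a \<Rightarrow> 'q \<times> 'q) \<Rightarrow> ('q \<Rightarrow> nat) \<Rightarrow> 'q \<Rightarrow> ('a \<times> bool) list \<Rightarrow> bool" where
  "accepting_loop delta rank q w =
     (is_loop delta q w \<and> even (Max (rank ` set (pstates delta q w))))"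

definition branching :: "('a \<times> bool) list \<Rightarrow> ('a \<times> bool) list \<Rightarrow> bool" where
  "branching w0 w1 = (\<exists>u a d v0 v1. w0 = u @ (a, d) # v0 \<and> w1 = u @ (a, \<not> d) # v1)"

end

theory Submission
  imports Defs "HOL-Library.Infinite_Set"
begin

(* Fix an accepting run rho = run delta init t that visits p at node u.
   For a node v let states_below rho v be the set of states the run takes in the
   subtree rooted at v.  These sets shrink when v is extended, so below u there is a
   node x whose set R is minimal; then every node below x still sees all of R
   ("x is stable").  Let q be a state of R of maximal rank m.  Since q occurs below
   every node below x, one can build a branch through x visiting q infinitely often
   while staying inside R; acceptance of the run along this branch forces m to be even.
   Finally, go from x to a node x0 labelled q, and from x0 return to q once after a left
   and once after a right step.  Read off the tree, these two returns are branching loops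
   at q whose states lie in R and include q, so their maximal rank is the even m. *)

fun tree_path :: "(bool list \<Rightarrow> 'a) \<Rightarrow> bool list \<Rightarrow> bool list \<Rightarrow> ('a \<times> bool) list" where
  "tree_path t v [] = []"
| "tree_path t v (d # w) = (t v, d) # tree_path t (v @ [d]) w"

lemma run_snoc: "run delta s t (v @ [d]) = dir d (delta (run delta s t v) (t v))"
  by (induction v arbitrary: s t) auto

lemma pstates_tree_path:
  "pstates delta (run delta s t v) (tree_path t v w)
     = map (\<lambda>i. run delta s t (v @ take i w)) [0..<Suc (length w)]"
proof (induction w arbitrary: v)
  case Nil
  then show ?case by simp
next
  case (Cons d w)
  show ?case
    using Cons.IH[of "v @ [d]"] run_snoc[of delta s t v d] by (simp add: map_upt_Suc del: upt_Suc)
qed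

lemma target_tree_path:
  "target delta (run delta s t v) (tree_path t v w) = run delta s t (v @ w)"
  unfolding target_def pstates_tree_path by simp

lemma chain_length:
  fixes f :: "nat \<Rightarrow> 'b list"
  assumes grow: "\<And>k. \<exists>w. w \<noteq> [] \<and> f (Suc k) = f k @ w"
  shows "length (f 0) + k \<le> length (f k)"
proof (induction k)
  case (Suc k)
  obtain w where "w \<noteq> []" "f (Suc k) = f k @ w" using grow by blast
  then show ?case using Suc.IH by (cases w) auto
qed simp

lemma branch_of_chain:
  fixes f :: "nat \<Rightarrow> 'b list"
  assumes grow: "\<And>k. \<exists>w. w \<noteq> [] \<and> f (Suc k) = f k @ w"
  shows "\<exists>\<beta>. \<forall>k. map \<beta> [0..<length (f k)] = f k"
proof -
  have len: "k \<le> length (f k)" for k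
    using chain_length[of f k] grow by simp
  have ext: "k \<le> k' \<Longrightarrow> \<exists>w. f k' = f k @ w" for k k'
  proof (induction k' rule: dec_induct)
    case (step k')
    then show ?case using grow[of k'] by force
  qed simp
  have agree: "f i ! j = f k ! j" if "j < length (f i)" "j < length (f k)" for i j k
  proof (cases "i \<le> k")
    case True
    then show ?thesis using ext[of i k] that by (auto simp: nth_append)
  next
    case False
    then show ?thesis using ext[of k i] that by (auto simp: nth_append)
  qed
  define \<beta> where "\<beta> i = f (Suc i) ! i" for i
  have "map \<beta> [0..<length (f k)] = f k" for k
  proof (rule nth_equalityI)
    fix j assume "j < length (map \<beta> [0..<length (f k)])"
    then show "map \<beta> [0..<length (f k)] ! j = f k ! j"
      using agree[of j "Suc j" k] len[of "Suc j"] by (simp add: \<beta>_def)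
  qed simp
  then show ?thesis by blast
qed

lemma recurrent_branch:
  assumes recur: "\<And>w. \<exists>w'. w' \<noteq> [] \<and> P (x @ w @ w')"
  shows "\<exists>\<beta>. map \<beta> [0..<length x] = x \<and> (\<exists>\<^sub>\<infinity>N. P (map \<beta> [0..<N]))"
proof -
  define ext where "ext y = y @ (SOME w'. w' \<noteq> [] \<and> P (y @ w'))" for y
  define f where "f k = (ext ^^ k) x" for k
  have below_x: "\<exists>w. f k = x @ w" for k
    by (induction k) (auto simp: f_def ext_def)
  have step: "\<exists>w. w \<noteq> [] \<and> f (Suc k) = f k @ w \<and> P (f (Suc k))" for k
  proof -
    obtain w where "f k = x @ w" using below_x by blast
    then have "\<exists>w'. w' \<noteq> [] \<and> P (f k @ w')" using recur[of w] by simp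
    then show ?thesis unfolding f_def funpow.simps comp_def ext_def
      by (rule someI2_ex) blast
  qed
  obtain \<beta> where \<beta>: "\<And>k. map \<beta> [0..<length (f k)] = f k"
    using branch_of_chain[of f] step by blast
  have len: "k \<le> length (f k)" for k
    using chain_length[of f k] step by fastforce
  have "\<exists>N>M. P (map \<beta> [0..<N])" for M
    using \<beta>[of "Suc M"] len[of "Suc M"] step[of M] by (intro exI[of _ "length (f (Suc M))"]) auto
  then have "\<exists>\<^sub>\<infinity>N. P (map \<beta> [0..<N])" unfolding INFM_nat by blast
  moreover have "map \<beta> [0..<length x] = x" using \<beta>[of 0] by (simp add: f_def)
  ultimately show ?thesis by blast
qed

text \<open>Parity acceptance: a rank attained infinitely often and eventually never
  exceeded is the highest rank occurring infinitely often, hence even.\<close>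
lemma parity_ok_max_even:
  assumes "parity_ok g" and bound: "\<forall>\<^sub>\<infinity>N. g N \<le> m" and often: "\<exists>\<^sub>\<infinity>N. g N = m"
  shows "even m"
proof -
  define S where "S = {r. \<exists>\<^sub>\<infinity>N. g N = r}"
  have le: "r \<le> m" if "r \<in> S" for r
  proof (rule ccontr)
    assume "\<not> r \<le> m"
    have "\<exists>\<^sub>\<infinity>N. g N \<le> m \<and> g N = r"
      using that bound unfolding S_def by (intro frequently_eventually_conj) auto
    then show False using \<open>\<not> r \<le> m\<close> by (auto dest: INFM_E)
  qed
  have "Max S = m"
    using le often finite_subset[of S "{..m}"] by (intro Max_eqI) (auto simp: S_def)
  then show ?thesis using \<open>parity_ok g\<close> unfolding parity_ok_def S_def by simp
qed

definition states_below :: "(bool list \<Rightarrow> 'q) \<Rightarrow> bool list \<Rightarrow> 'q set" where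
  "states_below \<rho> v = range (\<lambda>w. \<rho> (v @ w))"

definition stable :: "(bool list \<Rightarrow> 'q) \<Rightarrow> bool list \<Rightarrow> bool" where
  "stable \<rho> x \<longleftrightarrow> (\<forall>w. states_below \<rho> (x @ w) = states_below \<rho> x)"

lemma states_below_mono: "states_below \<rho> (v @ w) \<subseteq> states_below \<rho> v"
  unfolding states_below_def by auto

lemma in_states_below: "\<rho> v \<in> states_below \<rho> v"
  unfolding states_below_def by (auto intro: range_eqI[of _ _ "[]"])

text \<open>With finitely many states, below every node lies a stable node: take one whose
  set of states below has minimal cardinality.\<close>
lemma stable_node_exists:
  fixes \<rho> :: "bool list \<Rightarrow> 'q::finite"
  shows "\<exists>v. stable \<rho> (u @ v)"
proof -
  obtain v where min: "\<And>v'. card (states_below \<rho> (u @ v)) \<le> card (states_below \<rho> (u @ v'))"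
    using ex_has_least_nat[of "\<lambda>_. True" _ "\<lambda>v. card (states_below \<rho> (u @ v))"] by blast
  have "states_below \<rho> (u @ v @ w) = states_below \<rho> (u @ v)" for w
    using states_below_mono[of \<rho> "u @ v" w] min[of "v @ w"]
    by (intro card_seteq) auto
  then show ?thesis unfolding stable_def by auto
qed

lemma stable_reach:
  assumes "stable \<rho> x" and "q \<in> states_below \<rho> x"
  shows "\<exists>w. \<rho> (x @ y @ w) = q"
proof -
  have "q \<in> states_below \<rho> (x @ y)" using assms unfolding stable_def by simp
  then show ?thesis unfolding states_below_def by auto
qed

lemma max_rank_attained:
  fixes \<rho> :: "bool list \<Rightarrow> 'q::finite"
  obtains q where "q \<in> states_below \<rho> x" and "rank q = Max (rank ` states_below \<rho> x)"
proof -
  have "Max (rank ` states_below \<rho> x) \<in> rank ` states_below \<rho> x"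
    using in_states_below[of \<rho> x] by (intro Max_in) auto
  then obtain q where "Max (rank ` states_below \<rho> x) = rank q" "q \<in> states_below \<rho> x"
    by (rule imageE)
  then show ?thesis using that by simp
qed

text \<open>In an accepting run the maximal rank below a stable node is even: a branch
  revisiting a state of maximal rank forever stays in the subtree.\<close>
lemma stable_max_rank_even:
  fixes \<rho> :: "bool list \<Rightarrow> 'q::finite"
  assumes acc: "accepting_run rank \<rho>" and st: "stable \<rho> x"
  shows "even (Max (rank ` states_below \<rho> x))"
proof -
  define m where "m = Max (rank ` states_below \<rho> x)"
  obtain q where q: "q \<in> states_below \<rho> x" "rank q = m"
    using max_rank_attained unfolding m_def by blast
  have "\<exists>w'. w' \<noteq> [] \<and> \<rho> (x @ w @ w') = q" for w
    using stable_reach[OF st q(1), of "w @ [False]"] by force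
  then obtain \<beta> where \<beta>x: "map \<beta> [0..<length x] = x"
    and often: "\<exists>\<^sub>\<infinity>N. \<rho> (map \<beta> [0..<N]) = q"
    using recurrent_branch[where P = "\<lambda>v. \<rho> v = q"] by blast
  define g where "g N = rank (\<rho> (map \<beta> [0..<N]))" for N
  have "g N \<le> m" if "N \<ge> length x" for N
  proof -
    have "map \<beta> [0..<N] = x @ map \<beta> [length x..<N]"
      using that \<beta>x by (metis le_add_diff_inverse map_append upt_add_eq_append zero_le)
    then have "\<rho> (map \<beta> [0..<N]) \<in> states_below \<rho> x" unfolding states_below_def by auto
    then show ?thesis unfolding g_def m_def by simp
  qed
  then have "\<forall>\<^sub>\<infinity>N. g N \<le> m" unfolding MOST_nat_le by blast
  moreover have "\<exists>\<^sub>\<infinity>N. g N = m" using often q(2) unfolding g_def by (auto elim: INFM_mono)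
  moreover have "parity_ok g" using acc unfolding accepting_run_def g_def by blast
  ultimately show ?thesis unfolding m_def by (intro parity_ok_max_even)
qed

text \<open>Let q have the maximal rank below node x, and let this rank be even.  Then any
  nonempty tree path from a node x @ w0 labelled q back to q is an accepting loop at q:
  its states lie below x and include q.\<close>
lemma accepting_loop_at_max_rank:
  fixes delta :: "'q::finite \<Rightarrow> 'a \<Rightarrow> 'q \<times> 'q"
    and s :: 'q and t :: "bool list \<Rightarrow> 'a"
  defines "\<rho> \<equiv> run delta s t"
  assumes even_max: "even (Max (rank ` states_below \<rho> x))"
    and q_max: "rank q = Max (rank ` states_below \<rho> x)"
    and x0: "\<rho> (x @ w0) = q" and return: "\<rho> (x @ w0 @ w) = q" and "w \<noteq> []"
  shows "accepting_loop delta rank q (tree_path t (x @ w0) w)"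
proof -
  let ?A = "rank ` set (pstates delta q (tree_path t (x @ w0) w))"
  have states: "set (pstates delta q (tree_path t (x @ w0) w))
      = {\<rho> (x @ w0 @ take i w) | i. i \<le> length w}"
    using pstates_tree_path[of delta s t "x @ w0" w] x0
    unfolding \<rho>_def by (auto simp del: upt_Suc simp: image_iff)
  have below: "?A \<subseteq> rank ` states_below \<rho> x"
    unfolding states states_below_def by auto
  have "r \<le> rank q" if "r \<in> ?A" for r
    using below that unfolding q_max by (intro Max_ge) auto
  moreover have "rank q \<in> ?A"
    unfolding states using x0 by (intro imageI CollectI exI[of _ 0]) simp
  ultimately have "Max ?A = rank q"
    by (intro Max_eqI) auto
  moreover have "target delta q (tree_path t (x @ w0) w) = q"
    using target_tree_path[of delta s t "x @ w0" w] x0 return unfolding \<rho>_def by simp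
  ultimately show ?thesis
    unfolding accepting_loop_def is_loop_def using \<open>w \<noteq> []\<close> even_max q_max
    by (cases w) auto
qed

theorem lemma12p1:
  fixes delta :: "'q::finite \<Rightarrow> 'a::finite \<Rightarrow> 'q \<times> 'q"
    and rank :: "'q \<Rightarrow> nat" and init :: 'q and p :: 'q
  assumes "productive delta rank init p"
  shows "\<exists>q pi_p pi0 pi1. target delta p pi_p = q \<and> branching pi0 pi1 \<and>
           accepting_loop delta rank q pi0 \<and> accepting_loop delta rank q pi1"
proof -
  obtain t u where acc: "accepting_run rank (run delta init t)" and pu: "run delta init t u = p"
    using assms unfolding productive_def by blast
  define \<rho> where "\<rho> = run delta init t"
  obtain v where st: "stable \<rho> (u @ v)" using stable_node_exists by blast
  define x where "x = u @ v"
  define m where "m = Max (rank ` states_below \<rho> x)"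
  have even_m: "even m"
    using stable_max_rank_even acc st unfolding m_def x_def \<rho>_def .
  obtain q where q: "q \<in> states_below \<rho> x" "rank q = m"
    using max_rank_attained unfolding m_def by blast
  note reach = stable_reach[OF st[folded x_def] q(1)]
  obtain w0 where w0: "\<rho> (x @ w0) = q" using reach[of "[]"] by auto
  obtain w1 where w1: "\<rho> (x @ w0 @ False # w1) = q" using reach[of "w0 @ [False]"] by auto
  obtain w2 where w2: "\<rho> (x @ w0 @ True # w2) = q" using reach[of "w0 @ [True]"] by auto
  have "target delta p (tree_path t u (v @ w0)) = q"
    using target_tree_path[of delta init t u "v @ w0"] pu w0 unfolding \<rho>_def x_def by simp
  moreover have "branching (tree_path t (x @ w0) (False # w1)) (tree_path t (x @ w0) (True # w2))"
    unfolding branching_def by (intro exI[of _ "[]"]) auto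
  moreover have "accepting_loop delta rank q (tree_path t (x @ w0) (d # w))"
    if "\<rho> (x @ w0 @ d # w) = q" for d w
    using accepting_loop_at_max_rank[where delta = delta and s = init and t = t, folded \<rho>_def]
      even_m q(2) w0 that
    unfolding m_def by blast
  ultimately show ?thesis using w1 w2 by blast
qed

end
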